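(* Let $S$ be a closed subspace of $\ell_\infty$ with $c_0\subseteq S$ such that the quotient $\ell_\infty/S$ is separable. Then $S$ is an $\ell_\infty$-Grothendieck subspace.
   Context: Let $S$ be a closed subspace of $\ell_\infty$ containing $c_0$ and let $j:c_0\to S$ be the inclusion map. Then $j^{**}:c_0^{**}\equiv\ell_\infty\to S^{**}$ identifies $\ell_\infty$ with a subspace of $S^{**}$ containing $S$. A sequence $(x_n^* )$ in $S^*$ is said to be $\sigma(S^*,\ell_\infty)$-convergent to $x^*\in S^*$ if $\langle j^{**}z,x_n^*\rangle\to\langle j^{**}z,x^*\rangle$ for every $z\in\ell_\infty$ (equivalently, the restrictions $j^*x_n^*\in\ell_1$ converge to $j^*x^*$ in the topology $\sigma(\ell_1,\ell_\infty)$). The closed subspace $S$ of $\ell_\infty$ is called an $\ell_\infty$-Grothendieck subspace if $c_0\subseteq S$ and every $\sigma(S^*,S)$-convergent (weak$^*$-convergent) sequence in $S^*$ is $\sigma(S^*,\ell_\infty)$-convergent (to the same limit). *)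

theory Defs
  imports "HOL-Analysis.Analysis"
begin

(* The Banach space l-infinity of bounded real sequences, realised as the type
  nat =>C real of bounded continuous functions on the discrete space nat,
  with the supremum norm. *)

type_synonym linf = "nat \<Rightarrow>\<^sub>C real"

definition c0 :: "linf set" where
  "c0 = {x. (\<lambda>n. apply_bcontfun x n) \<longlonglongrightarrow> 0}"

definition unitvec :: "nat \<Rightarrow> linf" where
  "unitvec n = Bcontfun (\<lambda>k. if k = n then 1 else 0)"

(* Elements of the dual S^* : bounded linear functionals on the subspace S
  (only their values on S matter). *)
definition dual_elem :: "linf set \<Rightarrow> (linf \<Rightarrow> real) \<Rightarrow> bool" where
  "dual_elem S f \<longleftrightarrow>
     (\<forall>x\<in>S. \<forall>y\<in>S. f (x + y) = f x + f y) \<and>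
     (\<forall>c. \<forall>x\<in>S. f (c *\<^sub>R x) = c * f x) \<and>
     (\<exists>K. \<forall>x\<in>S. \<bar>f x\<bar> \<le> K * norm x)"

definition weak_star_conv :: "linf set \<Rightarrow> (nat \<Rightarrow> linf \<Rightarrow> real) \<Rightarrow> (linf \<Rightarrow> real) \<Rightarrow> bool" where
  "weak_star_conv S phi psi \<longleftrightarrow> (\<forall>x\<in>S. (\<lambda>k. phi k x) \<longlonglongrightarrow> psi x)"

(* sigma(S^*, l-infinity) convergence: the restrictions j^* x_k^* to c0, viewed as
  elements of l1 = c0^* via their coordinates x^*(e_n), converge in sigma(l1, l-infinity);
  the pairing of z in l-infinity with a in l1 is the sum of z_n a_n. *)
definition linf_conv :: "(nat \<Rightarrow> linf \<Rightarrow> real) \<Rightarrow> (linf \<Rightarrow> real) \<Rightarrow> bool" where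
  "linf_conv phi psi \<longleftrightarrow>
     (\<forall>z::linf. (\<lambda>k. \<Sum>n. apply_bcontfun z n * phi k (unitvec n)) \<longlonglongrightarrow> (\<Sum>n. apply_bcontfun z n * psi (unitvec n)))"

definition linf_grothendieck :: "linf set \<Rightarrow> bool" where
  "linf_grothendieck S \<longleftrightarrow> c0 \<subseteq> S \<and>
     (\<forall>phi psi. (\<forall>k. dual_elem S (phi k)) \<and> dual_elem S psi \<and> weak_star_conv S phi psi
        \<longrightarrow> linf_conv phi psi)"

(* Separability of the quotient l-infinity / S with the quotient norm
  norm [x] = infdist x S: there is a countable set whose classes are dense. *)
definition separable_quotient :: "linf set \<Rightarrow> bool" where
  "separable_quotient S \<longleftrightarrow>
     (\<exists>D. countable D \<and> (\<forall>x. \<forall>e>0. \<exists>d\<in>D. infdist (x - d) S < e))"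

end

theory Submission
  imports Defs
begin

locale linear_functional_on =
  fixes S :: "'a::real_vector set" and f :: "'a \<Rightarrow> real"
  assumes subspace: "subspace S"
    and add: "\<And>x y. x \<in> S \<Longrightarrow> y \<in> S \<Longrightarrow> f (x + y) = f x + f y"
    and scale: "\<And>c x. x \<in> S \<Longrightarrow> f (c *\<^sub>R x) = c * f x"
begin

lemma zero [simp]: "f 0 = 0"
  using scale[of 0 0] subspace by (simp add: subspace_0)

lemma diff: "x \<in> S \<Longrightarrow> y \<in> S \<Longrightarrow> f (x - y) = f x - f y"
  using add[of x "- y"] scale[of y "-1"] subspace by (simp add: subspace_neg)

lemma sum: "finite A \<Longrightarrow> (\<And>i. i \<in> A \<Longrightarrow> g i \<in> S) \<Longrightarrow> f (sum g A) = (\<Sum>i\<in>A. f (g i))"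
  by (induction A rule: finite_induct) (use subspace in \<open>auto simp: add subspace_sum\<close>)

end

lemma linear_functional_on_diff:
  assumes "linear_functional_on S f" "linear_functional_on S g"
  shows "linear_functional_on S (\<lambda>x. f x - g x)"
  using assms unfolding linear_functional_on_def by (auto simp: algebra_simps)

lemma linear_functional_on_continuous:
  fixes f :: "'a::real_normed_vector \<Rightarrow> real"
  assumes "linear_functional_on S f" and bound: "\<And>x. x \<in> S \<Longrightarrow> \<bar>f x\<bar> \<le> K * norm x"
  shows "continuous_on S f"
proof (rule lipschitz_on_continuous_on)
  interpret linear_functional_on S f by (fact assms(1))
  show "\<bar>K\<bar>-lipschitz_on S f"
  proof (rule lipschitz_onI)
    fix x y assume "x \<in> S" "y \<in> S"
    then have "dist (f x) (f y) \<le> K * norm (x - y)"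
      using bound[of "x - y"] subspace by (simp add: dist_real_def diff subspace_diff)
    also have "\<dots> \<le> \<bar>K\<bar> * dist x y" by (simp add: dist_norm mult_right_mono)
    finally show "dist (f x) (f y) \<le> \<bar>K\<bar> * dist x y" .
  qed simp
qed

lemma Baire_closed_cover:
  fixes T :: "nat \<Rightarrow> 'a set"
  assumes "completely_metrizable_space X" "topspace X \<noteq> {}"
    and "\<And>m. closedin X (T m)" "(\<Union>m. T m) = topspace X"
  obtains m where "X interior_of T m \<noteq> {}"
proof -
  have "X interior_of (\<Union>m. T m) \<noteq> {}"
    using assms(2,4) interior_of_topspace[of X] by simp
  then show thesis using Baire_category_alt[of X "range T"] assms(1,3) that by auto
qed

lemma completely_metrizable_space_closed:
  fixes S :: "'a::metric_space set"
  assumes "complete (UNIV :: 'a set)" "closed S"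
  shows "completely_metrizable_space (top_of_set S)"
proof -
  have "completely_metrizable_space (euclidean :: 'a topology)"
    using Met_TC.completely_metrizable_space_mtopology assms(1) by auto
  then show ?thesis using assms(2) by (metis closed_closedin completely_metrizable_space_closedin)
qed

lemma pointwise_bounded_imp_bounded_on_ball:
  fixes phi :: "nat \<Rightarrow> 'a::metric_space \<Rightarrow> real"
  assumes "complete (UNIV :: 'a set)" "closed S" "S \<noteq> {}" and cont: "\<And>k. continuous_on S (phi k)"
    and pointwise: "\<And>x. x \<in> S \<Longrightarrow> \<exists>B. \<forall>k. \<bar>phi k x\<bar> \<le> B"
  obtains r x0 B where "r > 0" "x0 \<in> S" "\<And>x k. x \<in> S \<Longrightarrow> dist x x0 < r \<Longrightarrow> \<bar>phi k x\<bar> \<le> B"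
proof -
  define T where "T m = {x\<in>S. \<forall>k. phi k x \<in> {-real m..real m}}" for m :: nat
  have closed_T: "closedin (top_of_set S) (T m)" for m
  proof -
    have "closedin (top_of_set S) (\<Inter>k. S \<inter> phi k -` {-real m..real m})"
      by (rule closedin_Inter) (auto intro!: continuous_closedin_preimage cont)
    moreover have "T m = (\<Inter>k. S \<inter> phi k -` {-real m..real m})"
      unfolding T_def by auto
    ultimately show ?thesis by simp
  qed
  have "x \<in> T (nat \<lceil>B\<rceil>)" if "x \<in> S" "\<forall>k. \<bar>phi k x\<bar> \<le> B" for x B
  proof -
    have "phi k x \<in> {-real (nat \<lceil>B\<rceil>)..real (nat \<lceil>B\<rceil>)}" for k
    proof -
      have "\<bar>phi k x\<bar> \<le> real (nat \<lceil>B\<rceil>)"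
        using that(2) real_nat_ceiling_ge[of B] by (meson order_trans)
      then show ?thesis by auto
    qed
    then show ?thesis unfolding T_def using that(1) by blast
  qed
  then have cover: "(\<Union>m. T m) = topspace (top_of_set S)" using pointwise by (fastforce simp: T_def)
  have "topspace (top_of_set S) \<noteq> {}" using \<open>S \<noteq> {}\<close> by simp
  then obtain m where "top_of_set S interior_of T m \<noteq> {}"
    using completely_metrizable_space_closed[OF assms(1,2)] closed_T cover
    by (metis Baire_closed_cover)
  then obtain x0 where x0: "x0 \<in> top_of_set S interior_of T m" by blast
  then obtain r where "r > 0" and r: "\<And>x. x \<in> S \<Longrightarrow> dist x x0 < r \<Longrightarrow> x \<in> T m"
    using openin_interior_of[of "top_of_set S" "T m"] interior_of_subset[of "top_of_set S" "T m"]
    unfolding openin_euclidean_subtopology_iff by blast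
  have "x0 \<in> S" using x0 interior_of_subset[of "top_of_set S" "T m"] unfolding T_def by auto
  have "\<bar>phi k x\<bar> \<le> real m" if "x \<in> S" "dist x x0 < r" for x k
  proof -
    have "phi k x \<in> {-real m..real m}" using r[OF that] unfolding T_def by blast
    then show ?thesis by auto
  qed
  with \<open>r > 0\<close> \<open>x0 \<in> S\<close> show thesis by (rule that)
qed

lemma linear_functional_on_bound_from_ball:
  fixes f :: "'a::real_normed_vector \<Rightarrow> real"
  assumes "linear_functional_on S f" "x0 \<in> S" "r > 0"
    and ball: "\<And>x. x \<in> S \<Longrightarrow> dist x x0 < r \<Longrightarrow> \<bar>f x\<bar> \<le> B" and "x \<in> S"
  shows "\<bar>f x\<bar> \<le> 4 * B / r * norm x"
proof (cases "x = 0")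
  case True
  then show ?thesis using linear_functional_on.zero[OF assms(1)] by simp
next
  case False
  interpret linear_functional_on S f by (fact assms(1))
  define c where "c = r / (2 * norm x)"
  have "c > 0" using \<open>r > 0\<close> False by (simp add: c_def)
  have cx: "c *\<^sub>R x \<in> S" using subspace \<open>x \<in> S\<close> by (simp add: subspace_scale)
  have "dist (x0 + c *\<^sub>R x) x0 < r"
    using \<open>r > 0\<close> \<open>c > 0\<close> False by (simp add: dist_norm c_def)
  then have "\<bar>f (x0 + c *\<^sub>R x)\<bar> \<le> B"
    using ball subspace \<open>x0 \<in> S\<close> cx by (simp add: subspace_add)
  moreover have "\<bar>f x0\<bar> \<le> B" using ball[OF \<open>x0 \<in> S\<close>] \<open>r > 0\<close> by simp
  moreover have "f (x0 + c *\<^sub>R x) = f x0 + c * f x"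
    using add[OF \<open>x0 \<in> S\<close> cx] scale[OF \<open>x \<in> S\<close>] by simp
  ultimately have "c * \<bar>f x\<bar> \<le> 2 * B"
    using abs_triangle_ineq4[of "f x0 + c * f x" "f x0"] \<open>c > 0\<close> by (simp add: abs_mult)
  then have "\<bar>f x\<bar> \<le> 2 * B / c" using \<open>c > 0\<close> by (simp add: pos_le_divide_eq mult.commute)
  also have "\<dots> = 4 * B / r * norm x" using \<open>r > 0\<close> False by (simp add: c_def)
  finally show ?thesis .
qed

lemma uniform_boundedness:
  fixes phi :: "nat \<Rightarrow> 'a::real_normed_vector \<Rightarrow> real"
  assumes "complete (UNIV :: 'a set)" "closed S" and lin: "\<And>k. linear_functional_on S (phi k)"
    and bounded: "\<And>k. \<exists>K. \<forall>x\<in>S. \<bar>phi k x\<bar> \<le> K * norm x"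
    and pointwise: "\<And>x. x \<in> S \<Longrightarrow> \<exists>B. \<forall>k. \<bar>phi k x\<bar> \<le> B"
  obtains L where "\<And>k x. x \<in> S \<Longrightarrow> \<bar>phi k x\<bar> \<le> L * norm x"
proof -
  have "S \<noteq> {}" using lin linear_functional_on.subspace subspace_0 by blast
  have cont: "continuous_on S (phi k)" for k
  proof -
    obtain K where "\<forall>x\<in>S. \<bar>phi k x\<bar> \<le> K * norm x" using bounded by blast
    then show ?thesis by (intro linear_functional_on_continuous[OF lin]) auto
  qed
  obtain r x0 B where "r > 0" "x0 \<in> S" "\<And>x k. x \<in> S \<Longrightarrow> dist x x0 < r \<Longrightarrow> \<bar>phi k x\<bar> \<le> B"
    using assms(1,2) \<open>S \<noteq> {}\<close> cont pointwise that by (rule pointwise_bounded_imp_bounded_on_ball)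
  then show thesis
    using lin by (intro that[of "4 * B / r"] linear_functional_on_bound_from_ball) auto
qed

lemma apply_Bcontfun_bounded:
  fixes f :: "nat \<Rightarrow> real"
  assumes "\<And>n. \<bar>f n\<bar> \<le> B"
  shows "apply_bcontfun (Bcontfun f) = f"
  using assms by (intro Bcontfun_inverse bcontfun_normI) auto

lemma complete_linf: "complete (UNIV :: linf set)"
  unfolding complete_def
proof (intro allI impI)
  fix f :: "nat \<Rightarrow> linf" assume "(\<forall>n. f n \<in> UNIV) \<and> Cauchy f"
  then obtain g where "uniform_limit UNIV f g sequentially"
    using uniformly_convergent_eq_cauchy[of "\<lambda>_. True" f]
    unfolding Cauchy_def uniform_limit_sequentially_iff by (metis dist_fun_lt_imp_dist_val_lt)
  from uniform_limit_bcontfunE[OF this sequentially_bot] obtain l where "f \<longlonglongrightarrow> l" by metis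
  then show "\<exists>l\<in>UNIV. f \<longlonglongrightarrow> l" by blast
qed

lemma abs_apply_le_norm: "\<bar>apply_bcontfun (x::linf) n\<bar> \<le> norm x"
  using norm_bounded[of x n] by simp

lemma norm_linf_le: "(\<And>n. \<bar>apply_bcontfun (x::linf) n\<bar> \<le> B) \<Longrightarrow> norm x \<le> B"
  by (rule norm_bound) simp

lemma apply_bcontfun_sum: "apply_bcontfun (sum g A) n = (\<Sum>i\<in>A. apply_bcontfun (g i) n)"
  by (induction A rule: infinite_finite_induct) auto

lemma unitvec_apply: "apply_bcontfun (unitvec m) n = (if n = m then 1 else 0)"
  unfolding unitvec_def by (subst apply_Bcontfun_bounded[of _ 1]) auto

lemma finite_support_in_c0:
  assumes "finite F" "\<And>n. n \<notin> F \<Longrightarrow> apply_bcontfun x n = 0"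
  shows "x \<in> c0"
proof -
  obtain N where "F \<subseteq> {..<N}"
    using assms(1) finite_nat_bounded by blast
  then have "\<forall>n\<ge>N. apply_bcontfun x n = 0" using assms(2) by force
  then have "(\<lambda>n. apply_bcontfun x n) \<longlonglongrightarrow> 0"
    by (intro tendsto_eventually) (auto simp: eventually_sequentially)
  then show ?thesis by (simp add: c0_def)
qed

lemma unitvec_in_c0: "unitvec n \<in> c0"
  by (rule finite_support_in_c0[of "{n}"]) (auto simp: unitvec_apply)

lemma finite_support_eq_sum_unitvec:
  assumes "finite F" "\<And>n. n \<notin> F \<Longrightarrow> apply_bcontfun x n = 0"
  shows "x = (\<Sum>m\<in>F. apply_bcontfun x m *\<^sub>R unitvec m)"
proof (rule bcontfun_eqI)
  fix n
  show "apply_bcontfun x n = apply_bcontfun (\<Sum>m\<in>F. apply_bcontfun x m *\<^sub>R unitvec m) n"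
    using assms
    by (cases "n \<in> F") (auto simp: apply_bcontfun_sum unitvec_apply if_distrib cong: if_cong)
qed

definition linf_restrict :: "nat set \<Rightarrow> linf \<Rightarrow> linf" where
  "linf_restrict E x = Bcontfun (\<lambda>n. if n \<in> E then apply_bcontfun x n else 0)"

lemma linf_restrict_apply:
  "apply_bcontfun (linf_restrict E x) n = (if n \<in> E then apply_bcontfun x n else 0)"
  unfolding linf_restrict_def by (subst apply_Bcontfun_bounded[of _ "norm x"]) (auto simp: abs_apply_le_norm)

definition pairing :: "(nat \<Rightarrow> real) \<Rightarrow> linf \<Rightarrow> real" where
  "pairing a x = (\<Sum>n. apply_bcontfun x n * a n)"

definition l1_norm :: "(nat \<Rightarrow> real) \<Rightarrow> real" where
  "l1_norm a = (\<Sum>n. \<bar>a n\<bar>)"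

lemma summable_pairing:
  fixes x :: linf
  assumes "summable (\<lambda>n. \<bar>a n\<bar>)"
  shows "summable (\<lambda>n. \<bar>apply_bcontfun x n * a n\<bar>)" "summable (\<lambda>n. apply_bcontfun x n * a n)"
proof -
  have "\<bar>apply_bcontfun x n * a n\<bar> \<le> norm x * \<bar>a n\<bar>" for n
    by (simp add: abs_mult mult_right_mono abs_apply_le_norm)
  then show "summable (\<lambda>n. \<bar>apply_bcontfun x n * a n\<bar>)"
    using summable_mult[OF assms, of "norm x"]
    by (intro summable_rabs_comparison_test[where g="\<lambda>n. norm x * \<bar>a n\<bar>"]) auto
  then show "summable (\<lambda>n. apply_bcontfun x n * a n)"
    by (rule summable_rabs_cancel)
qed

lemma abs_pairing_le:
  assumes "summable (\<lambda>n. \<bar>a n\<bar>)"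
  shows "\<bar>pairing a x\<bar> \<le> norm x * l1_norm a"
proof -
  have "\<bar>pairing a x\<bar> \<le> (\<Sum>n. \<bar>apply_bcontfun x n * a n\<bar>)"
    unfolding pairing_def using summable_pairing[OF assms] by (intro summable_rabs)
  also have "\<dots> \<le> (\<Sum>n. norm x * \<bar>a n\<bar>)"
    using summable_pairing(1)[OF assms] summable_mult[OF assms]
    by (intro suminf_le) (auto simp: abs_mult mult_right_mono abs_apply_le_norm)
  also have "\<dots> = norm x * l1_norm a"
    unfolding l1_norm_def using assms by (rule suminf_mult)
  finally show ?thesis .
qed

lemma linear_functional_on_pairing:
  assumes "summable (\<lambda>n. \<bar>a n\<bar>)" "subspace S"
  shows "linear_functional_on S (pairing a)"
proof
  fix x y :: linf and c :: real
  show "pairing a (x + y) = pairing a x + pairing a y"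
    unfolding pairing_def using summable_pairing(2)[OF assms(1), of x] summable_pairing(2)[OF assms(1), of y]
    by (simp add: suminf_add distrib_right)
  show "pairing a (c *\<^sub>R x) = c * pairing a x"
    unfolding pairing_def using summable_pairing(2)[OF assms(1), of x]
    by (simp add: suminf_mult[symmetric] mult.assoc)
qed (fact assms(2))

lemma pairing_finite_support:
  assumes "finite F" "\<And>n. n \<notin> F \<Longrightarrow> apply_bcontfun x n = 0"
  shows "pairing a x = (\<Sum>n\<in>F. apply_bcontfun x n * a n)"
  unfolding pairing_def using assms by (intro suminf_finite) auto

lemma pairing_lower_bound:
  fixes x :: linf
  assumes a: "summable (\<lambda>n. \<bar>a n\<bar>)" and "finite I"
    and bounded: "\<And>n. \<bar>apply_bcontfun x n\<bar> \<le> c"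
    and signs: "\<And>n. n \<in> I \<Longrightarrow> \<bar>apply_bcontfun x n - sgn (a n)\<bar> \<le> e"
  shows "pairing a x \<ge> (1 - e) * (\<Sum>n\<in>I. \<bar>a n\<bar>) - c * (l1_norm a - (\<Sum>n\<in>I. \<bar>a n\<bar>))"
proof -
  define g where "g n = apply_bcontfun x n * a n" for n
  define h where "h n = (if n \<in> I then 0 else g n)" for n
  define t where "t n = (if n \<in> I then 0 else \<bar>a n\<bar>)" for n
  have sum_I: "(\<lambda>n. if n \<in> I then u n else 0) sums (\<Sum>n\<in>I. u n)" for u :: "nat \<Rightarrow> real"
    using sums_finite[OF \<open>finite I\<close>, of "\<lambda>n. if n \<in> I then u n else 0"] by simp
  have "g sums pairing a x"
    unfolding g_def pairing_def using summable_pairing(2)[OF a] by (rule summable_sums)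
  from sums_diff[OF this sum_I[of g]] have h_sums: "h sums (pairing a x - (\<Sum>n\<in>I. g n))"
    unfolding h_def by (simp add: if_distrib cong: if_cong)
  have "(\<lambda>n. \<bar>a n\<bar>) sums l1_norm a" unfolding l1_norm_def using a by (rule summable_sums)
  from sums_diff[OF this sum_I[of "\<lambda>n. \<bar>a n\<bar>"]] have t_sums: "t sums (l1_norm a - (\<Sum>n\<in>I. \<bar>a n\<bar>))"
    unfolding t_def by (simp add: if_distrib cong: if_cong)
  have h_le: "\<bar>h n\<bar> \<le> c * t n" for n
    using bounded[of n] unfolding h_def t_def g_def by (simp add: abs_mult mult_right_mono)
  have "summable (\<lambda>n. c * t n)" using sums_mult[OF t_sums] by (rule sums_summable)
  then have h_abs: "summable (\<lambda>n. \<bar>h n\<bar>)"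
    using h_le by (intro summable_rabs_comparison_test[where g="\<lambda>n. c * t n"]) auto
  have "\<bar>pairing a x - (\<Sum>n\<in>I. g n)\<bar> = \<bar>\<Sum>n. h n\<bar>"
    using h_sums by (simp add: sums_iff)
  also have "\<dots> \<le> (\<Sum>n. \<bar>h n\<bar>)" by (rule summable_rabs[OF h_abs])
  also have "\<dots> \<le> (\<Sum>n. c * t n)"
    using h_abs \<open>summable (\<lambda>n. c * t n)\<close> h_le by (intro suminf_le) auto
  also have "\<dots> = c * (l1_norm a - (\<Sum>n\<in>I. \<bar>a n\<bar>))"
    using sums_mult[OF t_sums, of c] by (simp add: sums_iff)
  finally have "(\<Sum>n\<in>I. g n) - c * (l1_norm a - (\<Sum>n\<in>I. \<bar>a n\<bar>)) \<le> pairing a x"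
    by (simp add: abs_le_iff)
  moreover have "(1 - e) * \<bar>a n\<bar> \<le> g n" if "n \<in> I" for n
  proof -
    have "sgn (a n) * a n = \<bar>a n\<bar>" by (simp add: sgn_if)
    then have "g n = \<bar>a n\<bar> + (apply_bcontfun x n - sgn (a n)) * a n"
      unfolding g_def by (simp add: algebra_simps)
    moreover have "\<bar>(apply_bcontfun x n - sgn (a n)) * a n\<bar> \<le> e * \<bar>a n\<bar>"
      using signs[OF that] by (simp add: abs_mult mult_right_mono)
    moreover have "(1 - e) * \<bar>a n\<bar> = \<bar>a n\<bar> - e * \<bar>a n\<bar>" by (simp add: left_diff_distrib)
    ultimately show ?thesis by linarith
  qed
  then have "(1 - e) * (\<Sum>n\<in>I. \<bar>a n\<bar>) \<le> (\<Sum>n\<in>I. g n)"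
    by (simp add: sum_distrib_left sum_mono)
  ultimately show ?thesis by linarith
qed

definition dual_coeff :: "(linf \<Rightarrow> real) \<Rightarrow> nat \<Rightarrow> real" where
  "dual_coeff f n = f (unitvec n)"

definition singular_part :: "(linf \<Rightarrow> real) \<Rightarrow> linf \<Rightarrow> real" where
  "singular_part f x = f x - pairing (dual_coeff f) x"

locale bounded_functional_on = linear_functional_on S f for S :: "linf set" and f +
  fixes L :: real
  assumes c0_subset: "c0 \<subseteq> S" and bound: "\<And>x. x \<in> S \<Longrightarrow> \<bar>f x\<bar> \<le> L * norm x"
begin

lemma unitvec_in: "unitvec n \<in> S"
  using c0_subset unitvec_in_c0 by blast

lemma finite_support_in: "finite F \<Longrightarrow> (\<And>n. n \<notin> F \<Longrightarrow> apply_bcontfun x n = 0) \<Longrightarrow> x \<in> S"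
  using c0_subset finite_support_in_c0 by blast

lemma bound_nonneg: "0 \<le> L"
proof -
  have "unitvec 0 \<noteq> 0"
    using unitvec_apply[of 0 0] by (metis zero_bcontfun.rep_eq zero_neq_one)
  moreover have "0 \<le> L * norm (unitvec 0)"
    using bound[OF unitvec_in, of 0] abs_ge_zero[of "f (unitvec 0)"] by linarith
  ultimately show ?thesis by (simp add: zero_le_mult_iff)
qed

lemma eq_pairing_finite_support:
  assumes "finite F" "\<And>n. n \<notin> F \<Longrightarrow> apply_bcontfun x n = 0"
  shows "f x = pairing (dual_coeff f) x"
proof -
  have "f x = f (\<Sum>m\<in>F. apply_bcontfun x m *\<^sub>R unitvec m)"
    using finite_support_eq_sum_unitvec[OF assms] by simp
  also have "\<dots> = (\<Sum>m\<in>F. apply_bcontfun x m * dual_coeff f m)"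
    using assms(1) subspace unitvec_in by (simp add: sum scale subspace_scale dual_coeff_def)
  also have "\<dots> = pairing (dual_coeff f) x"
    using pairing_finite_support[OF assms] by simp
  finally show ?thesis .
qed

lemma sum_abs_dual_coeff_le:
  assumes "finite F"
  shows "(\<Sum>n\<in>F. \<bar>dual_coeff f n\<bar>) \<le> L"
proof -
  define x where "x = (\<Sum>m\<in>F. sgn (dual_coeff f m) *\<^sub>R unitvec m)"
  have x_apply: "apply_bcontfun x n = (if n \<in> F then sgn (dual_coeff f n) else 0)" for n
    unfolding x_def using assms
    by (cases "n \<in> F") (auto simp: apply_bcontfun_sum unitvec_apply if_distrib cong: if_cong)
  have "(\<Sum>n\<in>F. \<bar>dual_coeff f n\<bar>) = (\<Sum>n\<in>F. apply_bcontfun x n * dual_coeff f n)"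
    by (intro sum.cong) (auto simp: x_apply sgn_mult_abs abs_sgn mult.commute)
  also have "\<dots> = f x"
    using eq_pairing_finite_support[OF assms] pairing_finite_support[OF assms] x_apply by simp
  also have "\<dots> \<le> L * norm x"
    using bound[OF finite_support_in[OF assms, of x]] x_apply by simp
  also have "\<dots> \<le> L"
    using norm_linf_le[of x 1] bound_nonneg by (simp add: x_apply abs_sgn_eq mult_left_le)
  finally show ?thesis .
qed

lemma summable_dual_coeff: "summable (\<lambda>n. \<bar>dual_coeff f n\<bar>)"
  by (rule bounded_imp_summable[where B=L]) (auto intro: sum_abs_dual_coeff_le)

lemma l1_norm_dual_coeff_le: "l1_norm (dual_coeff f) \<le> L"
  unfolding l1_norm_def using summable_dual_coeff
  by (rule suminf_le_const) (auto intro: sum_abs_dual_coeff_le)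

lemma linear_singular_part: "linear_functional_on S (singular_part f)"
  unfolding singular_part_def
  by (intro linear_functional_on_diff linear_functional_on_pairing summable_dual_coeff subspace)
     unfold_locales

lemma singular_part_finite_support:
  "finite F \<Longrightarrow> (\<And>n. n \<notin> F \<Longrightarrow> apply_bcontfun x n = 0) \<Longrightarrow> singular_part f x = 0"
  unfolding singular_part_def using eq_pairing_finite_support by simp

lemma abs_singular_part_le:
  assumes "x \<in> S"
  shows "\<bar>singular_part f x\<bar> \<le> 2 * L * norm x"
  using bound[OF assms] abs_pairing_le[OF summable_dual_coeff, of x]
    mult_left_mono[OF l1_norm_dual_coeff_le norm_ge_zero[of x]]
    abs_triangle_ineq4[of "f x" "pairing (dual_coeff f) x"] mult.commute[of "norm x" L]
  unfolding singular_part_def by linarith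

text \<open>The singular part only sees the values of its argument outside any finite set.\<close>
lemma abs_singular_part_le_off_finite:
  assumes "finite E" "x \<in> S" "\<And>n. n \<notin> E \<Longrightarrow> \<bar>apply_bcontfun x n\<bar> \<le> B" "0 \<le> B"
  shows "\<bar>singular_part f x\<bar> \<le> 2 * L * B"
proof -
  interpret singular: linear_functional_on S "singular_part f" by (rule linear_singular_part)
  have restrict_in: "linf_restrict E x \<in> S"
    using assms(1) by (intro finite_support_in[of E]) (auto simp: linf_restrict_apply)
  have "singular_part f x = singular_part f (x - linf_restrict E x)"
    using singular.diff[OF assms(2) restrict_in] assms(1)
    by (simp add: singular_part_finite_support[of E] linf_restrict_apply)
  also have "\<bar>\<dots>\<bar> \<le> 2 * L * norm (x - linf_restrict E x)"
    using assms(2) restrict_in subspace by (intro abs_singular_part_le subspace_diff)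
  also have "\<dots> \<le> 2 * L * B"
    using assms(3,4) bound_nonneg by (intro mult_left_mono norm_linf_le) (auto simp: linf_restrict_apply)
  finally show ?thesis .
qed

end

lemma dual_elem_imp_bounded_functional_on:
  assumes "subspace S" "c0 \<subseteq> S" "dual_elem S f"
  obtains L where "bounded_functional_on S f L"
  using assms unfolding dual_elem_def bounded_functional_on_def bounded_functional_on_axioms_def
    linear_functional_on_def by blast

lemma gliding_hump:
  fixes a :: "nat \<Rightarrow> nat \<Rightarrow> real"
  assumes summable: "\<And>k. summable (\<lambda>n. \<bar>a k n\<bar>)"
    and coordinatewise: "\<And>n. (\<lambda>k. a k n) \<longlonglongrightarrow> 0"
    and frequently_large: "\<And>K. \<exists>k\<ge>K. \<delta> \<le> l1_norm (a k)"
    and "\<eta> > 0"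
  obtains k b where "strict_mono k" "strict_mono b"
    "\<And>j. (\<Sum>n<b j. \<bar>a (k j) n\<bar>) < \<eta>" "\<And>j. \<delta> \<le> l1_norm (a (k j))"
    "\<And>j. l1_norm (a (k j)) - (\<Sum>n<b (Suc j). \<bar>a (k j) n\<bar>) < \<eta>"
proof -
  define hump where "hump p p' \<longleftrightarrow> fst p' > fst p \<and> snd p' > snd p \<and>
     (\<Sum>n<snd p. \<bar>a (fst p') n\<bar>) < \<eta> \<and> \<delta> \<le> l1_norm (a (fst p')) \<and>
     l1_norm (a (fst p')) - (\<Sum>n<snd p'. \<bar>a (fst p') n\<bar>) < \<eta>" for p p' :: "nat \<times> nat"
  have "\<exists>p'. hump (k, q) p'" for k q
  proof -
    have "(\<lambda>k. \<Sum>n<q. \<bar>a k n\<bar>) \<longlonglongrightarrow> (\<Sum>n<q. 0)"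
      by (intro tendsto_sum tendsto_rabs_zero coordinatewise)
    then obtain K where K: "\<And>k'. k' \<ge> K \<Longrightarrow> (\<Sum>n<q. \<bar>a k' n\<bar>) < \<eta>"
      using \<open>\<eta> > 0\<close> unfolding LIMSEQ_iff by force
    obtain k' where k': "k' \<ge> max K (Suc k)" "\<delta> \<le> l1_norm (a k')"
      using frequently_large by blast
    have "(\<lambda>m. \<Sum>n<m. \<bar>a k' n\<bar>) \<longlonglongrightarrow> l1_norm (a k')"
      unfolding l1_norm_def by (rule summable_LIMSEQ[OF summable])
    then obtain Q where Q: "\<And>m. m \<ge> Q \<Longrightarrow> \<bar>(\<Sum>n<m. \<bar>a k' n\<bar>) - l1_norm (a k')\<bar> < \<eta>"
      using \<open>\<eta> > 0\<close> unfolding LIMSEQ_iff by force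
    have "hump (k, q) (k', max Q (Suc q))"
      unfolding hump_def using k' K[of k'] Q[of "max Q (Suc q)"] by (auto simp: abs_less_iff)
    then show ?thesis by blast
  qed
  then have "\<exists>p'. hump p p'" for p by (metis prod.collapse)
  then obtain next_hump where next_hump: "\<And>p. hump p (next_hump p)" by metis
  define p where "p j = (next_hump ^^ j) (0, 0)" for j
  have hump_Suc: "hump (p j) (p (Suc j))" for j
    unfolding p_def using next_hump by simp
  show thesis
  proof
    show "strict_mono (\<lambda>j. fst (p (Suc j)))"
      using hump_Suc unfolding hump_def by (intro strict_monoI_Suc) blast
    show "strict_mono (\<lambda>j. snd (p j))"
      using hump_Suc unfolding hump_def by (intro strict_monoI_Suc) blast
  qed (use hump_Suc in \<open>auto simp: hump_def p_def\<close>)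
qed

definition block_index :: "(nat \<Rightarrow> nat) \<Rightarrow> nat \<Rightarrow> nat" where
  "block_index b n = (LEAST j. n < b (Suc j))"

lemma less_block_end:
  assumes "strict_mono b"
  shows "n < b (Suc (block_index b n))"
  unfolding block_index_def
  by (rule LeastI[of _ n]) (use seq_suble[OF assms, of "Suc n"] in simp)

lemma block_index_eq:
  assumes "strict_mono b" "b j \<le> n" "n < b (Suc j)"
  shows "block_index b n = j"
  unfolding block_index_def
proof (rule Least_equality)
  show "j \<le> i" if "n < b (Suc i)" for i
    using that assms by (metis Suc_le_eq leD le_less_trans not_le strict_mono_less_eq)
qed (fact assms(3))

lemma finite_block:
  assumes "strict_mono b"
  shows "finite {n. block_index b n = j}"
proof (rule finite_subset)
  show "{n. block_index b n = j} \<subseteq> {..<b (Suc j)}" using less_block_end[OF assms] by auto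
qed simp

lemma norm_linf_restrict_le: "norm (linf_restrict E x) \<le> norm x"
  by (rule norm_linf_le) (simp add: linf_restrict_apply abs_apply_le_norm)

definition prefix_codes :: "(nat \<Rightarrow> bool) \<Rightarrow> nat set" where
  "prefix_codes f = range (\<lambda>m. to_nat (map f [0..<m]))"

lemma infinite_prefix_codes: "infinite (prefix_codes f)"
proof -
  have "inj (\<lambda>m. to_nat (map f [0..<m]))"
  proof (rule injI)
    fix m m' assume "to_nat (map f [0..<m]) = to_nat (map f [0..<m'])"
    then have "length (map f [0..<m]) = length (map f [0..<m'])" by simp
    then show "m = m'" by simp
  qed
  then show ?thesis unfolding prefix_codes_def using range_inj_infinite by blast
qed

lemma finite_prefix_codes_Int:
  assumes "f \<noteq> g"
  shows "finite (prefix_codes f \<inter> prefix_codes g)"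
proof -
  obtain i where i: "f i \<noteq> g i" using assms by auto
  have "prefix_codes f \<inter> prefix_codes g \<subseteq> (\<lambda>m. to_nat (map f [0..<m])) ` {..i}"
  proof
    fix y assume "y \<in> prefix_codes f \<inter> prefix_codes g"
    then obtain m m' where y: "y = to_nat (map f [0..<m])" "y = to_nat (map g [0..<m'])"
      unfolding prefix_codes_def by blast
    then have eq: "map f [0..<m] = map g [0..<m']" by simp
    then have "length (map f [0..<m]) = length (map g [0..<m'])" by simp
    then have "m = m'" by simp
    have "m \<le> i"
    proof (rule ccontr)
      assume "\<not> m \<le> i"
      then have "map f [0..<m] ! i = map g [0..<m'] ! i" using eq by simp
      then show False using \<open>\<not> m \<le> i\<close> \<open>m = m'\<close> i by simp
    qed
    then show "y \<in> (\<lambda>m. to_nat (map f [0..<m])) ` {..i}" using y by auto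
  qed
  then show ?thesis by (rule finite_subset) auto
qed

lemma infinite_prefix_codes_Diff:
  assumes "f \<noteq> g"
  shows "infinite (prefix_codes f - prefix_codes g)"
proof
  assume "finite (prefix_codes f - prefix_codes g)"
  then have "finite ((prefix_codes f - prefix_codes g) \<union> (prefix_codes f \<inter> prefix_codes g))"
    using finite_prefix_codes_Int[OF assms] by blast
  moreover have "(prefix_codes f - prefix_codes g) \<union> (prefix_codes f \<inter> prefix_codes g) = prefix_codes f"
    by blast
  ultimately show False using infinite_prefix_codes[of f] by simp
qed

lemma uncountable_nat_to_bool: "uncountable (UNIV :: (nat \<Rightarrow> bool) set)"
proof
  assume "countable (UNIV :: (nat \<Rightarrow> bool) set)"
  then obtain g :: "nat \<Rightarrow> nat \<Rightarrow> bool" where "range g = UNIV"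
    using uncountable_def by blast
  then obtain i where "g i = (\<lambda>n. \<not> g n n)" by (metis UNIV_I imageE)
  from fun_cong[OF this, of i] show False by simp
qed

lemma limsup_level:
  fixes x :: "'a \<Rightarrow> real"
  assumes "infinite T" and bounded: "\<And>t. t \<in> T \<Longrightarrow> \<bar>x t\<bar> \<le> B" and "\<eta> > 0"
  obtains c where "finite {t\<in>T. c + \<eta> < x t}" "infinite {t\<in>T. c - \<eta> < x t}"
proof -
  define Y where "Y = {y. infinite {t\<in>T. y < x t}}"
  have "- B - 1 < x t" if "t \<in> T" for t using bounded[OF that] by (simp add: abs_le_iff)
  then have "{t\<in>T. - B - 1 < x t} = T" by auto
  then have "- B - 1 \<in> Y" unfolding Y_def using \<open>infinite T\<close> by simp
  have "bdd_above Y"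
  proof (rule bdd_aboveI)
    fix y assume "y \<in> Y"
    then have "infinite {t\<in>T. y < x t}" unfolding Y_def by simp
    then obtain t where "t \<in> T" "y < x t" using not_finite_existsD by blast
    then show "y \<le> B" using bounded[of t] abs_ge_self[of "x t"] by linarith
  qed
  show thesis
  proof (rule that)
    show "finite {t\<in>T. Sup Y + \<eta> < x t}"
    proof (rule ccontr)
      assume "infinite {t\<in>T. Sup Y + \<eta> < x t}"
      then have "Sup Y + \<eta> \<le> Sup Y" using \<open>bdd_above Y\<close> by (intro cSup_upper) (auto simp: Y_def)
      then show False using \<open>\<eta> > 0\<close> by simp
    qed
    obtain y where "y \<in> Y" "Sup Y - \<eta> < y"
      using less_cSup_iff[of Y "Sup Y - \<eta>"] \<open>- B - 1 \<in> Y\<close> \<open>bdd_above Y\<close> \<open>\<eta> > 0\<close> by force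
    then have "{t\<in>T. y < x t} \<subseteq> {t\<in>T. Sup Y - \<eta> < x t}" by auto
    moreover have "infinite {t\<in>T. y < x t}" using \<open>y \<in> Y\<close> by (simp add: Y_def)
    ultimately show "infinite {t\<in>T. Sup Y - \<eta> < x t}" by (rule infinite_super)
  qed
qed

lemma balanced_sums_gap:
  fixes x :: "'a \<Rightarrow> real"
  assumes "infinite {t\<in>T. \<alpha> < x t}" "infinite {t\<in>T. x t < \<beta>}" "\<beta> \<le> \<alpha>" "m \<ge> 1"
    and balanced: "\<And>P Q. P \<subseteq> T \<Longrightarrow> Q \<subseteq> T \<Longrightarrow> finite P \<Longrightarrow> finite Q \<Longrightarrow> P \<inter> Q = {} \<Longrightarrow>
        card P = m \<Longrightarrow> card Q = m \<Longrightarrow> (\<Sum>p\<in>P. x p) - (\<Sum>q\<in>Q. x q) \<le> C"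
  shows "real m * (\<alpha> - \<beta>) < C"
proof -
  obtain P where P: "finite P" "card P = m" "P \<subseteq> {t\<in>T. \<alpha> < x t}"
    using assms(1) infinite_arbitrarily_large by blast
  obtain Q where Q: "finite Q" "card Q = m" "Q \<subseteq> {t\<in>T. x t < \<beta>}"
    using assms(2) infinite_arbitrarily_large by blast
  have "P \<inter> Q = {}" using P(3) Q(3) \<open>\<beta> \<le> \<alpha>\<close> by force
  have "P \<noteq> {}" "Q \<noteq> {}" using P(2) Q(2) \<open>m \<ge> 1\<close> by auto
  have "real m * \<alpha> < (\<Sum>p\<in>P. x p)"
    using sum_strict_mono[OF P(1) \<open>P \<noteq> {}\<close>, of "\<lambda>_. \<alpha>" x] P by auto
  moreover have "(\<Sum>q\<in>Q. x q) < real m * \<beta>"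
    using sum_strict_mono[OF Q(1) \<open>Q \<noteq> {}\<close>, of x "\<lambda>_. \<beta>"] Q by auto
  moreover have "(\<Sum>p\<in>P. x p) - (\<Sum>q\<in>Q. x q) \<le> C"
    using balanced[OF _ _ P(1) Q(1) \<open>P \<inter> Q = {}\<close> P(2) Q(2)] P(3) Q(3) by auto
  ultimately show ?thesis by (simp add: algebra_simps)
qed

lemma cluster_up_to_finite:
  fixes x :: "'a \<Rightarrow> real"
  assumes "infinite T" and bounded: "\<And>t. t \<in> T \<Longrightarrow> \<bar>x t\<bar> \<le> B" and "\<gamma> > 0"
    and "m \<ge> 1" "C \<le> real m * \<gamma> / 4"
    and balanced: "\<And>P Q. P \<subseteq> T \<Longrightarrow> Q \<subseteq> T \<Longrightarrow> finite P \<Longrightarrow> finite Q \<Longrightarrow> P \<inter> Q = {} \<Longrightarrow>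
        card P = m \<Longrightarrow> card Q = m \<Longrightarrow> (\<Sum>p\<in>P. x p) - (\<Sum>q\<in>Q. x q) \<le> C"
  shows "\<exists>F. finite F \<and> (\<forall>t\<in>T - F. \<forall>t'\<in>T - F. \<bar>x t - x t'\<bar> \<le> \<gamma>)"
proof -
  have "\<gamma> / 4 > 0" using \<open>\<gamma> > 0\<close> by simp
  obtain c where upper: "finite {t\<in>T. c + \<gamma>/4 < x t}" and "infinite {t\<in>T. c - \<gamma>/4 < x t}"
    using \<open>infinite T\<close> bounded \<open>\<gamma> / 4 > 0\<close> that by (rule limsup_level)
  have lower: "finite {t\<in>T. x t < c - \<gamma>/2}"
  proof (rule ccontr)
    assume "infinite {t\<in>T. x t < c - \<gamma>/2}"
    moreover have "c - \<gamma>/2 \<le> c - \<gamma>/4" using \<open>\<gamma> > 0\<close> by simp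
    ultimately have "real m * ((c - \<gamma>/4) - (c - \<gamma>/2)) < C"
      using \<open>infinite {t\<in>T. c - \<gamma>/4 < x t}\<close> \<open>m \<ge> 1\<close> balanced
      by (intro balanced_sums_gap[where T=T])
    then show False using \<open>C \<le> real m * \<gamma> / 4\<close> by simp
  qed
  show ?thesis
  proof (intro exI conjI)
    show "finite ({t\<in>T. c + \<gamma>/4 < x t} \<union> {t\<in>T. x t < c - \<gamma>/2})" using upper lower by simp
  qed (auto simp: abs_le_iff)
qed

lemma two_points_outside_finite_sets:
  assumes "uncountable T" "\<And>j::nat. finite (F j)"
  obtains t t' where "t \<in> T" "t' \<in> T" "t \<noteq> t'" "\<And>j. t \<notin> F j" "\<And>j. t' \<notin> F j"
proof -
  have "uncountable (T - (\<Union>j. F j))"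
    using assms by (intro uncountable_minus_countable countable_UN) (auto intro: countable_finite)
  then have "infinite (T - (\<Union>j. F j))" using uncountable_infinite by blast
  then obtain U where "U \<subseteq> T - (\<Union>j. F j)" "card U = 2" "finite U"
    by (meson infinite_arbitrarily_large)
  then show thesis using that by (auto simp: card_2_iff)
qed

lemma separable_quotient_pigeonhole:
  fixes y :: "'i \<Rightarrow> linf"
  assumes "separable_quotient S" "S \<noteq> {}" "\<epsilon> > 0" "uncountable I"
  obtains d T s where "T \<subseteq> I" "uncountable T" "\<And>t. t \<in> T \<Longrightarrow> s t \<in> S"
    "\<And>t. t \<in> T \<Longrightarrow> norm (y t - d - s t) < \<epsilon>"
proof -
  obtain D where "countable D" and dense: "\<And>x. \<exists>d\<in>D. infdist (x - d) S < \<epsilon>"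
    using assms(1,3) unfolding separable_quotient_def by blast
  have "\<exists>d\<in>D. \<exists>s\<in>S. norm (y t - d - s) < \<epsilon>" for t
  proof -
    obtain d where "d \<in> D" "infdist (y t - d) S < \<epsilon>" using dense by blast
    moreover have "bdd_below ((\<lambda>s. dist (y t - d) s) ` S)" by (rule bdd_belowI[of _ 0]) auto
    ultimately obtain s where "s \<in> S" "dist (y t - d) s < \<epsilon>"
      using cINF_less_iff[OF assms(2)] infdist_notempty[OF assms(2)] by metis
    then show ?thesis using \<open>d \<in> D\<close> by (auto simp: dist_norm)
  qed
  then obtain d s where ds: "\<And>t. d t \<in> D" "\<And>t. s t \<in> S" "\<And>t. norm (y t - d t - s t) < \<epsilon>"
    by metis
  have "\<exists>e. uncountable {t\<in>I. d t = e}"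
  proof (rule ccontr)
    assume "\<nexists>e. uncountable {t\<in>I. d t = e}"
    then have "countable (\<Union>e\<in>D. {t\<in>I. d t = e})" using \<open>countable D\<close> by auto
    moreover have "I \<subseteq> (\<Union>e\<in>D. {t\<in>I. d t = e})" using ds(1) by auto
    ultimately show False using \<open>uncountable I\<close> countable_subset by blast
  qed
  then obtain e where e: "uncountable {t\<in>I. d t = e}" by blast
  show thesis by (rule that[where T="{t\<in>I. d t = e}" and s=s and d=e]) (use e ds in auto)
qed

lemma finite_block_preimage:
  assumes "strict_mono b" "finite A"
  shows "finite (block_index b -` A)"
proof -
  have "block_index b -` A = (\<Union>j\<in>A. {n. block_index b n = j})" by auto
  then show ?thesis using assms finite_block by auto
qed

lemma restrict_combination_bounded_off_finite:
  fixes \<zeta> :: linf and U :: "'i \<Rightarrow> nat set"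
  assumes "norm \<zeta> \<le> 1" "finite P" "finite Q" "P \<inter> Q = {}"
    and almost_disjoint: "\<And>p q. p \<in> P \<union> Q \<Longrightarrow> q \<in> P \<union> Q \<Longrightarrow> p \<noteq> q \<Longrightarrow> finite (U p \<inter> U q)"
  shows "\<exists>E. finite E \<and> (\<forall>n. n \<notin> E \<longrightarrow>
    \<bar>apply_bcontfun ((\<Sum>p\<in>P. linf_restrict (U p) \<zeta>) - (\<Sum>q\<in>Q. linf_restrict (U q) \<zeta>)) n\<bar> \<le> 1)"
proof (intro exI conjI allI impI)
  define R where "R = P \<union> Q"
  show "finite (\<Union>p\<in>R. \<Union>q\<in>R - {p}. U p \<inter> U q)"
    using assms(2,3) almost_disjoint unfolding R_def by (intro finite_UN_I) auto
  fix n assume n: "n \<notin> (\<Union>p\<in>R. \<Union>q\<in>R - {p}. U p \<inter> U q)"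
  have restrict_n: "apply_bcontfun (linf_restrict (U p) \<zeta>) n = (if n \<in> U p then apply_bcontfun \<zeta> n else 0)" for p
    by (simp add: linf_restrict_apply)
  have "\<bar>apply_bcontfun \<zeta> n\<bar> \<le> 1" using abs_apply_le_norm[of \<zeta> n] assms(1) by linarith
  show "\<bar>apply_bcontfun ((\<Sum>p\<in>P. linf_restrict (U p) \<zeta>) - (\<Sum>q\<in>Q. linf_restrict (U q) \<zeta>)) n\<bar> \<le> 1"
  proof (cases "\<exists>p0\<in>R. n \<in> U p0")
    case False
    then show ?thesis by (simp add: apply_bcontfun_sum restrict_n R_def)
  next
    case True
    then obtain p0 where "p0 \<in> R" "n \<in> U p0" by blast
    with n have unique: "p \<in> R \<Longrightarrow> n \<in> U p \<longleftrightarrow> p = p0" for p by blast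
    have "(\<Sum>p\<in>X. apply_bcontfun (linf_restrict (U p) \<zeta>) n) = (if p0 \<in> X then apply_bcontfun \<zeta> n else 0)"
      if "X \<subseteq> R" "finite X" for X
      using that unique by (simp add: restrict_n subset_iff if_distrib cong: if_cong)
    then show ?thesis
      using assms(2-4) \<open>\<bar>apply_bcontfun \<zeta> n\<bar> \<le> 1\<close> by (auto simp: apply_bcontfun_sum R_def)
  qed
qed

lemma norm_sum_diff_sum_le:
  fixes s w :: "'i \<Rightarrow> 'a::real_normed_vector"
  assumes "finite P" "finite Q" "card P = m" "card Q = m"
    and close: "\<And>p. p \<in> P \<union> Q \<Longrightarrow> norm (w p - d - s p) \<le> \<epsilon>"
  shows "norm (((\<Sum>p\<in>P. s p) - (\<Sum>q\<in>Q. s q)) - ((\<Sum>p\<in>P. w p) - (\<Sum>q\<in>Q. w q))) \<le> 2 * real m * \<epsilon>"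
proof -
  have "((\<Sum>p\<in>P. s p) - (\<Sum>q\<in>Q. s q)) - ((\<Sum>p\<in>P. w p) - (\<Sum>q\<in>Q. w q))
      = (\<Sum>q\<in>Q. w q - d - s q) - (\<Sum>p\<in>P. w p - d - s p)"
    using assms(3,4) by (simp add: sum.distrib sum_subtractf sum_constant_scaleR algebra_simps)
  also have "norm \<dots> \<le> (\<Sum>q\<in>Q. norm (w q - d - s q)) + (\<Sum>p\<in>P. norm (w p - d - s p))"
    by (rule order_trans[OF norm_triangle_ineq4 add_mono[OF norm_sum norm_sum]])
  also have "\<dots> \<le> (\<Sum>q\<in>Q. \<epsilon>) + (\<Sum>p\<in>P. \<epsilon>)"
    using close by (intro add_mono sum_mono) auto
  also have "\<dots> = 2 * real m * \<epsilon>" using assms(3,4) by simp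
  finally show ?thesis .
qed

context bounded_functional_on
begin

lemma singular_part_balanced_sums:
  fixes U :: "'i \<Rightarrow> nat set" and s :: "'i \<Rightarrow> linf"
  assumes "norm \<zeta> \<le> 1" "finite P" "finite Q" "P \<inter> Q = {}" "card P = m" "card Q = m"
    and almost_disjoint: "\<And>p q. p \<in> P \<union> Q \<Longrightarrow> q \<in> P \<union> Q \<Longrightarrow> p \<noteq> q \<Longrightarrow> finite (U p \<inter> U q)"
    and approx: "\<And>p. p \<in> P \<union> Q \<Longrightarrow> s p \<in> S \<and> norm (linf_restrict (U p) \<zeta> - d - s p) < \<epsilon>"
  shows "(\<Sum>p\<in>P. singular_part f (s p)) - (\<Sum>q\<in>Q. singular_part f (s q)) \<le> 2 * L * (1 + 2 * real m * \<epsilon>)"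
proof -
  interpret singular: linear_functional_on S "singular_part f" by (rule linear_singular_part)
  define v where "v = (\<Sum>p\<in>P. s p) - (\<Sum>q\<in>Q. s q)"
  define W where "W = (\<Sum>p\<in>P. linf_restrict (U p) \<zeta>) - (\<Sum>q\<in>Q. linf_restrict (U q) \<zeta>)"
  have "sum s P \<in> S" "sum s Q \<in> S" using approx by (auto intro: subspace_sum[OF subspace])
  then have "v \<in> S" unfolding v_def by (rule subspace_diff[OF subspace])
  have singular_v: "singular_part f v = (\<Sum>p\<in>P. singular_part f (s p)) - (\<Sum>q\<in>Q. singular_part f (s q))"
    unfolding v_def using \<open>sum s P \<in> S\<close> \<open>sum s Q \<in> S\<close> assms(2,3) approx
    by (simp add: singular.diff singular.sum)
  have v_close: "norm (v - W) \<le> 2 * real m * \<epsilon>"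
    unfolding v_def W_def using assms(2,3,5,6) approx by (intro norm_sum_diff_sum_le) (auto intro: less_imp_le)
  have "\<exists>E. finite E \<and> (\<forall>n. n \<notin> E \<longrightarrow> \<bar>apply_bcontfun W n\<bar> \<le> 1)"
    unfolding W_def using assms(1-4) almost_disjoint by (rule restrict_combination_bounded_off_finite)
  then obtain E where "finite E" and E: "\<And>n. n \<notin> E \<Longrightarrow> \<bar>apply_bcontfun W n\<bar> \<le> 1" by auto
  have "\<bar>apply_bcontfun v n\<bar> \<le> 1 + 2 * real m * \<epsilon>" if "n \<notin> E" for n
  proof -
    have "\<bar>apply_bcontfun (v - W) n\<bar> \<le> 2 * real m * \<epsilon>"
      using abs_apply_le_norm[of "v - W" n] v_close by linarith
    moreover have "apply_bcontfun v n = apply_bcontfun (v - W) n + apply_bcontfun W n" by simp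
    ultimately show ?thesis using E[OF that] by linarith
  qed
  moreover have "0 \<le> 1 + 2 * real m * \<epsilon>" using order_trans[OF norm_ge_zero v_close] by simp
  ultimately have "\<bar>singular_part f v\<bar> \<le> 2 * L * (1 + 2 * real m * \<epsilon>)"
    by (rule abs_singular_part_le_off_finite[OF \<open>finite E\<close> \<open>v \<in> S\<close>])
  then show ?thesis using singular_v by simp
qed

end

context bounded_functional_on
begin

lemma singular_part_cluster:
  fixes U :: "'i \<Rightarrow> nat set" and s :: "'i \<Rightarrow> linf"
  assumes "infinite T" "norm \<zeta> \<le> 1" "\<gamma> > 0" "32 * L * \<epsilon> \<le> \<gamma>" "\<epsilon> \<le> 1"
    and almost_disjoint: "\<And>t t'. t \<in> T \<Longrightarrow> t' \<in> T \<Longrightarrow> t \<noteq> t' \<Longrightarrow> finite (U t \<inter> U t')"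
    and approx: "\<And>t. t \<in> T \<Longrightarrow> s t \<in> S \<and> norm (linf_restrict (U t) \<zeta> - d - s t) < \<epsilon>"
  shows "\<exists>F. finite F \<and>
    (\<forall>t\<in>T - F. \<forall>t'\<in>T - F. \<bar>singular_part f (s t) - singular_part f (s t')\<bar> \<le> \<gamma>)"
proof -
  define m where "m = nat \<lceil>16 * L / \<gamma>\<rceil> + 1"
  have "16 * L / \<gamma> \<le> real m" unfolding m_def by linarith
  then have "16 * L \<le> real m * \<gamma>" using \<open>\<gamma> > 0\<close> by (simp add: pos_divide_le_eq)
  moreover have "real m * (32 * L * \<epsilon>) \<le> real m * \<gamma>" using \<open>32 * L * \<epsilon> \<le> \<gamma>\<close> by (simp add: mult_left_mono)
  ultimately have m_large: "2 * L * (1 + 2 * real m * \<epsilon>) \<le> real m * \<gamma> / 4"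
    by (simp add: algebra_simps)
  have bounded: "\<bar>singular_part f (s t)\<bar> \<le> 2 * L * (2 + norm d)" if "t \<in> T" for t
  proof -
    have "norm (s t) \<le> norm (linf_restrict (U t) \<zeta>) + norm d + norm (linf_restrict (U t) \<zeta> - d - s t)"
      using norm_triangle_ineq4[of "linf_restrict (U t) \<zeta> - d" "linf_restrict (U t) \<zeta> - d - s t"]
        norm_triangle_ineq4[of "linf_restrict (U t) \<zeta>" d] by simp
    also have "\<dots> \<le> 2 + norm d"
      using norm_linf_restrict_le[of "U t" \<zeta>] \<open>norm \<zeta> \<le> 1\<close> approx[OF that] \<open>\<epsilon> \<le> 1\<close> by linarith
    finally show ?thesis
      using abs_singular_part_le[of "s t"] approx[OF that] bound_nonneg
      by (meson mult_left_mono order_trans zero_le_mult_iff zero_le_numeral)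
  qed
  have balanced: "(\<Sum>p\<in>P. singular_part f (s p)) - (\<Sum>q\<in>Q. singular_part f (s q)) \<le> 2 * L * (1 + 2 * real m * \<epsilon>)"
    if "P \<subseteq> T" "Q \<subseteq> T" "finite P" "finite Q" "P \<inter> Q = {}" "card P = m" "card Q = m" for P Q
  proof (rule singular_part_balanced_sums[OF \<open>norm \<zeta> \<le> 1\<close> that(3-7)])
    show "finite (U p \<inter> U q)" if "p \<in> P \<union> Q" "q \<in> P \<union> Q" "p \<noteq> q" for p q
      using almost_disjoint \<open>P \<subseteq> T\<close> \<open>Q \<subseteq> T\<close> that by blast
    show "s p \<in> S \<and> norm (linf_restrict (U p) \<zeta> - d - s p) < \<epsilon>" if "p \<in> P \<union> Q" for p
      using approx \<open>P \<subseteq> T\<close> \<open>Q \<subseteq> T\<close> that by blast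
  qed
  have "m \<ge> 1" by (simp add: m_def)
  show ?thesis
    using \<open>infinite T\<close> bounded \<open>\<gamma> > 0\<close> \<open>m \<ge> 1\<close> m_large balanced
    by (rule cluster_up_to_finite[where x="\<lambda>t. singular_part f (s t)"])
qed

end

lemma pairing_ge_on_hump:
  fixes u :: linf
  assumes "summable (\<lambda>n. \<bar>a n\<bar>)" "qa \<le> qb"
    and head: "(\<Sum>n<qa. \<bar>a n\<bar>) < \<delta> / 10" and "0 \<le> \<delta>" "\<delta> \<le> l1_norm a"
    and tail: "l1_norm a - (\<Sum>n<qb. \<bar>a n\<bar>) < \<delta> / 10"
    and "0 \<le> \<epsilon>" "\<epsilon> \<le> 1/20"
    and bounded: "\<And>n. \<bar>apply_bcontfun u n\<bar> \<le> 1 + 2 * \<epsilon>"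
    and signs: "\<And>n. qa \<le> n \<Longrightarrow> n < qb \<Longrightarrow> \<bar>apply_bcontfun u n - sgn (a n)\<bar> \<le> 2 * \<epsilon>"
  shows "\<delta> / 2 \<le> pairing a u"
proof -
  define B where "B = (\<Sum>n\<in>{qa..<qb}. \<bar>a n\<bar>)"
  have "(\<Sum>n<qb. \<bar>a n\<bar>) = (\<Sum>n<qa. \<bar>a n\<bar>) + B"
    using sum.atLeastLessThan_concat[of 0 qa qb "\<lambda>n. \<bar>a n\<bar>"] \<open>qa \<le> qb\<close>
    by (simp add: atLeast0LessThan B_def)
  then have "l1_norm a - B < 2 * \<delta> / 10" "8 * \<delta> / 10 \<le> B" using head tail \<open>\<delta> \<le> l1_norm a\<close> by linarith+
  have "(1 - 2 * \<epsilon>) * B - (1 + 2 * \<epsilon>) * (l1_norm a - B) \<le> pairing a u"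
    unfolding B_def using assms(1) bounded signs by (intro pairing_lower_bound) auto
  moreover have "9/10 * B \<le> (1 - 2 * \<epsilon>) * B"
    using \<open>\<epsilon> \<le> 1/20\<close> by (intro mult_right_mono) (auto simp: B_def sum_nonneg)
  moreover have "(1 + 2 * \<epsilon>) * (l1_norm a - B) \<le> (1 + 2 * \<epsilon>) * (2 * \<delta> / 10)"
    using \<open>l1_norm a - B < 2 * \<delta> / 10\<close> \<open>0 \<le> \<epsilon>\<close> by (intro mult_left_mono) auto
  moreover have "(1 + 2 * \<epsilon>) * (2 * \<delta> / 10) \<le> 11/10 * (2 * \<delta> / 10)"
    using \<open>\<epsilon> \<le> 1/20\<close> \<open>0 \<le> \<delta>\<close> by (intro mult_right_mono) auto
  ultimately show ?thesis using \<open>8 * \<delta> / 10 \<le> B\<close> by linarith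
qed

lemma restrict_difference_close:
  fixes \<zeta> u :: linf
  assumes "norm \<zeta> \<le> 1" and close: "norm (u - (linf_restrict U \<zeta> - linf_restrict U' \<zeta>)) \<le> e"
  shows "\<bar>apply_bcontfun u n\<bar> \<le> 1 + e"
    and "n \<in> U \<Longrightarrow> n \<notin> U' \<Longrightarrow> \<bar>apply_bcontfun u n - apply_bcontfun \<zeta> n\<bar> \<le> e"
proof -
  have "\<bar>apply_bcontfun u n - (apply_bcontfun (linf_restrict U \<zeta>) n - apply_bcontfun (linf_restrict U' \<zeta>) n)\<bar> \<le> e"
    using abs_apply_le_norm[of "u - (linf_restrict U \<zeta> - linf_restrict U' \<zeta>)" n] close by simp
  moreover have "\<bar>apply_bcontfun \<zeta> n\<bar> \<le> 1" using abs_apply_le_norm[of \<zeta> n] assms(1) by linarith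
  moreover have "\<bar>apply_bcontfun (linf_restrict U \<zeta>) n - apply_bcontfun (linf_restrict U' \<zeta>) n\<bar> \<le> 1"
    using \<open>\<bar>apply_bcontfun \<zeta> n\<bar> \<le> 1\<close>
    by (cases "n \<in> U"; cases "n \<in> U'") (simp_all add: linf_restrict_apply)
  ultimately show "\<bar>apply_bcontfun u n\<bar> \<le> 1 + e" by linarith
  show "\<bar>apply_bcontfun u n - apply_bcontfun \<zeta> n\<bar> \<le> e" if "n \<in> U" "n \<notin> U'"
    using \<open>\<bar>apply_bcontfun u n - _\<bar> \<le> e\<close> that by (simp add: linf_restrict_apply)
qed

definition sign_vector :: "(nat \<Rightarrow> nat \<Rightarrow> real) \<Rightarrow> (nat \<Rightarrow> nat) \<Rightarrow> linf" where
  "sign_vector a b = Bcontfun (\<lambda>n. sgn (a (block_index b n) n))"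

lemma apply_sign_vector: "apply_bcontfun (sign_vector a b) n = sgn (a (block_index b n) n)"
  unfolding sign_vector_def by (subst apply_Bcontfun_bounded[of _ 1]) (auto simp: abs_sgn_eq)

lemma norm_sign_vector_le: "norm (sign_vector a b) \<le> 1"
  by (rule norm_linf_le) (simp add: apply_sign_vector abs_sgn_eq)

definition prefix_blocks :: "(nat \<Rightarrow> nat) \<Rightarrow> (nat \<Rightarrow> bool) \<Rightarrow> nat set" where
  "prefix_blocks b f = block_index b -` prefix_codes f"

lemma finite_prefix_blocks_Int:
  assumes "strict_mono b" "f \<noteq> g"
  shows "finite (prefix_blocks b f \<inter> prefix_blocks b g)"
  unfolding prefix_blocks_def vimage_Int[symmetric]
  using finite_block_preimage[OF assms(1) finite_prefix_codes_Int[OF assms(2)]] .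

locale hump_sequence =
  fixes S :: "linf set" and phi :: "nat \<Rightarrow> linf \<Rightarrow> real" and L \<delta> :: real and k b :: "nat \<Rightarrow> nat"
  assumes separable: "separable_quotient S"
    and bounded: "\<And>k. bounded_functional_on S (phi k) L"
    and null: "\<And>x. x \<in> S \<Longrightarrow> (\<lambda>k. phi k x) \<longlonglongrightarrow> 0"
    and delta_pos: "\<delta> > 0" and subseq: "strict_mono k" and blocks: "strict_mono b"
    and head: "\<And>j. (\<Sum>n<b j. \<bar>dual_coeff (phi (k j)) n\<bar>) < \<delta> / 10"
    and large: "\<And>j. \<delta> \<le> l1_norm (dual_coeff (phi (k j)))"
    and tail: "\<And>j. l1_norm (dual_coeff (phi (k j))) - (\<Sum>n<b (Suc j). \<bar>dual_coeff (phi (k j)) n\<bar>) < \<delta> / 10"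
begin

definition hump_vector :: "(nat \<Rightarrow> bool) \<Rightarrow> linf" where
  "hump_vector f = linf_restrict (prefix_blocks b f) (sign_vector (\<lambda>j. dual_coeff (phi (k j))) b)"

lemma value_ge_on_hump:
  assumes "u \<in> S" "0 \<le> \<epsilon>" "\<epsilon> \<le> 1/20"
    and close: "norm (u - (hump_vector t - hump_vector t')) \<le> 2 * \<epsilon>"
    and "j \<in> prefix_codes t" "j \<notin> prefix_codes t'"
    and singular: "\<bar>singular_part (phi (k j)) u\<bar> \<le> \<delta> / 10"
  shows "2 * \<delta> / 5 \<le> phi (k j) u"
proof -
  interpret bounded_functional_on S "phi (k j)" L by (rule bounded)
  note u_close = restrict_difference_close[OF norm_sign_vector_le close[unfolded hump_vector_def]]
  have "\<delta> / 2 \<le> pairing (dual_coeff (phi (k j))) u"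
  proof (rule pairing_ge_on_hump)
    show "\<bar>apply_bcontfun u n\<bar> \<le> 1 + 2 * \<epsilon>" for n by (rule u_close(1))
    show "\<bar>apply_bcontfun u n - sgn (dual_coeff (phi (k j)) n)\<bar> \<le> 2 * \<epsilon>"
      if "b j \<le> n" "n < b (Suc j)" for n
      using u_close(2)[of n] block_index_eq[OF blocks that] assms(5,6)
      by (simp add: prefix_blocks_def apply_sign_vector)
  qed (use summable_dual_coeff head large tail delta_pos assms(2,3) blocks
      in \<open>auto simp: strict_mono_less_eq\<close>)
  moreover have "phi (k j) u = pairing (dual_coeff (phi (k j))) u + singular_part (phi (k j)) u"
    by (simp add: singular_part_def)
  ultimately show ?thesis using singular by linarith
qed

lemma separated_pair:
  assumes "0 < \<epsilon>" "\<epsilon> \<le> 1" "32 * L * \<epsilon> \<le> \<delta> / 10"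
  obtains u t t' where "u \<in> S" "t \<noteq> t'" "norm (u - (hump_vector t - hump_vector t')) \<le> 2 * \<epsilon>"
    "\<And>j. \<bar>singular_part (phi (k j)) u\<bar> \<le> \<delta> / 10"
proof -
  interpret phi0: bounded_functional_on S "phi 0" L by (rule bounded)
  have "S \<noteq> {}" using phi0.subspace subspace_0 by blast
  obtain T s d where "uncountable T" and approx: "\<And>t. t \<in> T \<Longrightarrow> s t \<in> S \<and> norm (hump_vector t - d - s t) < \<epsilon>"
    using separable_quotient_pigeonhole[OF separable \<open>S \<noteq> {}\<close> \<open>0 < \<epsilon>\<close> uncountable_nat_to_bool, of hump_vector]
    by metis
  define close_on where "close_on j F \<longleftrightarrow> finite F \<and> (\<forall>t\<in>T - F. \<forall>t'\<in>T - F.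
      \<bar>singular_part (phi (k j)) (s t) - singular_part (phi (k j)) (s t')\<bar> \<le> \<delta> / 10)" for j F
  have "\<exists>F. close_on j F" for j
  proof -
    interpret bounded_functional_on S "phi (k j)" L by (rule bounded)
    have "infinite T" using \<open>uncountable T\<close> uncountable_infinite by blast
    have almost_disjoint: "\<And>t t'. t \<in> T \<Longrightarrow> t' \<in> T \<Longrightarrow> t \<noteq> t' \<Longrightarrow>
        finite (prefix_blocks b t \<inter> prefix_blocks b t')"
      using finite_prefix_blocks_Int[OF blocks] by blast
    have "\<delta> / 10 > 0" using delta_pos by simp
    show ?thesis
      unfolding close_on_def
      using \<open>infinite T\<close> norm_sign_vector_le \<open>\<delta> / 10 > 0\<close> assms(3,2) almost_disjoint
        approx[unfolded hump_vector_def]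
      by (rule singular_part_cluster)
  qed
  then have F: "close_on j (SOME F. close_on j F)" for j by (rule someI_ex)
  obtain t t' where "t \<in> T" "t' \<in> T" "t \<noteq> t'" "\<And>j. t \<notin> (SOME F. close_on j F)" "\<And>j. t' \<notin> (SOME F. close_on j F)"
    using two_points_outside_finite_sets[OF \<open>uncountable T\<close>, of "\<lambda>j. SOME F. close_on j F"] F
    unfolding close_on_def by blast
  show thesis
  proof (rule that[of "s t - s t'" t t'])
    show "s t - s t' \<in> S" using approx \<open>t \<in> T\<close> \<open>t' \<in> T\<close> phi0.subspace by (simp add: subspace_diff)
    show "t \<noteq> t'" by fact
    have "norm (s t - s t' - (hump_vector t - hump_vector t'))
        = norm ((hump_vector t' - d - s t') - (hump_vector t - d - s t))"
      by (rule arg_cong[where f=norm]) (simp add: algebra_simps)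
    also have "\<dots> \<le> norm (hump_vector t' - d - s t') + norm (hump_vector t - d - s t)"
      by (rule norm_triangle_ineq4)
    also have "\<dots> \<le> 2 * \<epsilon>" using approx[OF \<open>t \<in> T\<close>] approx[OF \<open>t' \<in> T\<close>] by linarith
    finally show "norm (s t - s t' - (hump_vector t - hump_vector t')) \<le> 2 * \<epsilon>" .
    show "\<bar>singular_part (phi (k j)) (s t - s t')\<bar> \<le> \<delta> / 10" for j
    proof -
      interpret bounded_functional_on S "phi (k j)" L by (rule bounded)
      interpret singular: linear_functional_on S "singular_part (phi (k j))" by (rule linear_singular_part)
      show ?thesis
        using F[of j] \<open>t \<in> T\<close> \<open>t' \<in> T\<close> \<open>t \<notin> _\<close> \<open>t' \<notin> _\<close> approx
        unfolding close_on_def by (simp add: singular.diff)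
    qed
  qed
qed

lemma impossible: False
proof -
  interpret phi0: bounded_functional_on S "phi 0" L by (rule bounded)
  define \<epsilon> where "\<epsilon> = min (1/20) (\<delta> / (320 * (L + 1)))"
  have "0 \<le> L" by (rule phi0.bound_nonneg)
  then have "0 < \<epsilon>" using delta_pos by (simp add: \<epsilon>_def)
  have "\<epsilon> \<le> 1/20" unfolding \<epsilon>_def by (rule min.cobounded1)
  then have "\<epsilon> \<le> 1" by simp
  have "32 * L * \<epsilon> \<le> 32 * (L + 1) * (\<delta> / (320 * (L + 1)))"
    using \<open>0 \<le> L\<close> \<open>0 < \<epsilon>\<close> unfolding \<epsilon>_def by (intro mult_mono) auto
  also have "\<dots> = \<delta> / 10" using \<open>0 \<le> L\<close> by (simp add: field_simps)
  finally have "32 * L * \<epsilon> \<le> \<delta> / 10" .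
  then obtain u t t' where u: "u \<in> S" "t \<noteq> t'" "norm (u - (hump_vector t - hump_vector t')) \<le> 2 * \<epsilon>"
    "\<And>j. \<bar>singular_part (phi (k j)) u\<bar> \<le> \<delta> / 10"
    by (rule separated_pair[OF \<open>0 < \<epsilon>\<close> \<open>\<epsilon> \<le> 1\<close>]) (rule that)
  have "(\<lambda>j. phi (k j) u) \<longlonglongrightarrow> 0"
    using LIMSEQ_subseq_LIMSEQ[OF null[OF u(1)] subseq] by (simp add: comp_def)
  moreover have "2 * \<delta> / 5 > 0" using delta_pos by simp
  ultimately have "\<exists>J. \<forall>j\<ge>J. norm (phi (k j) u - 0) < 2 * \<delta> / 5" unfolding LIMSEQ_iff by blast
  then obtain J where J: "\<And>j. j \<ge> J \<Longrightarrow> \<bar>phi (k j) u\<bar> < 2 * \<delta> / 5" by auto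
  obtain j where "j \<ge> J" "j \<in> prefix_codes t" "j \<notin> prefix_codes t'"
    using infinite_prefix_codes_Diff[OF u(2)] unfolding infinite_nat_iff_unbounded_le by blast
  then have "2 * \<delta> / 5 \<le> phi (k j) u"
    using value_ge_on_hump[OF u(1) _ \<open>\<epsilon> \<le> 1/20\<close> u(3) _ _ u(4)] \<open>0 < \<epsilon>\<close> by simp
  then show False using J[OF \<open>j \<ge> J\<close>] by linarith
qed

end

lemma l1_norm_dual_coeff_tendsto_zero:
  fixes phi :: "nat \<Rightarrow> linf \<Rightarrow> real"
  assumes "separable_quotient S"
    and bounded: "\<And>k. bounded_functional_on S (phi k) L"
    and null: "\<And>x. x \<in> S \<Longrightarrow> (\<lambda>k. phi k x) \<longlonglongrightarrow> 0"
  shows "(\<lambda>k. l1_norm (dual_coeff (phi k))) \<longlonglongrightarrow> 0"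
proof (rule ccontr)
  assume "\<not> ?thesis"
  moreover have "0 \<le> l1_norm (dual_coeff (phi k))" for k
    unfolding l1_norm_def by (simp add: suminf_nonneg bounded_functional_on.summable_dual_coeff[OF bounded])
  ultimately obtain \<delta> where "\<delta> > 0" and large: "\<And>K. \<exists>k\<ge>K. \<delta> \<le> l1_norm (dual_coeff (phi k))"
    unfolding LIMSEQ_iff by (auto simp: not_less)
  have coordinatewise: "(\<lambda>k. dual_coeff (phi k) n) \<longlonglongrightarrow> 0" for n
    unfolding dual_coeff_def using null bounded_functional_on.unitvec_in[OF bounded] by blast
  have "\<delta> / 10 > 0" using \<open>\<delta> > 0\<close> by simp
  obtain k b where hump: "strict_mono k" "strict_mono b"
    "\<And>j. (\<Sum>n<b j. \<bar>dual_coeff (phi (k j)) n\<bar>) < \<delta> / 10" "\<And>j. \<delta> \<le> l1_norm (dual_coeff (phi (k j)))"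
    "\<And>j. l1_norm (dual_coeff (phi (k j))) - (\<Sum>n<b (Suc j). \<bar>dual_coeff (phi (k j)) n\<bar>) < \<delta> / 10"
    by (rule gliding_hump[OF bounded_functional_on.summable_dual_coeff[OF bounded] coordinatewise large
          \<open>\<delta> / 10 > 0\<close>]) (rule that)
  have "hump_sequence S phi L \<delta> k b"
    by (intro hump_sequence.intro assms \<open>\<delta> > 0\<close> hump)
  then show False by (rule hump_sequence.impossible)
qed

lemma dual_elem_diff:
  assumes "dual_elem S f" "dual_elem S g"
  shows "dual_elem S (\<lambda>x. f x - g x)"
  unfolding dual_elem_def
proof (intro conjI)
  obtain K K' where "\<forall>x\<in>S. \<bar>f x\<bar> \<le> K * norm x" "\<forall>x\<in>S. \<bar>g x\<bar> \<le> K' * norm x"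
    using assms unfolding dual_elem_def by blast
  then have "\<forall>x\<in>S. \<bar>f x - g x\<bar> \<le> (K + K') * norm x"
    by (auto simp: distrib_right intro: order_trans[OF abs_triangle_ineq4 add_mono])
  then show "\<exists>K. \<forall>x\<in>S. \<bar>f x - g x\<bar> \<le> K * norm x" by blast
qed (use assms in \<open>auto simp: dual_elem_def right_diff_distrib\<close>)

lemma summable_dual_coeff_if_dual_elem:
  assumes "subspace S" "c0 \<subseteq> S" "dual_elem S f"
  shows "summable (\<lambda>n. \<bar>dual_coeff f n\<bar>)"
proof -
  obtain L where "bounded_functional_on S f L"
    by (rule dual_elem_imp_bounded_functional_on[OF assms]) (rule that)
  then show ?thesis by (rule bounded_functional_on.summable_dual_coeff)
qed

lemma weak_star_null_imp_uniformly_bounded: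
  assumes "subspace S" "closed S" "c0 \<subseteq> S" and dual: "\<And>k. dual_elem S (phi k)"
    and null: "\<And>x. x \<in> S \<Longrightarrow> (\<lambda>k. phi k x) \<longlonglongrightarrow> 0"
  obtains L where "\<And>k. bounded_functional_on S (phi k) L"
proof -
  have lin: "linear_functional_on S (phi k)" for k
    using dual[of k] \<open>subspace S\<close> unfolding dual_elem_def linear_functional_on_def by blast
  have bounded: "\<exists>K. \<forall>x\<in>S. \<bar>phi k x\<bar> \<le> K * norm x" for k
    using dual[of k] unfolding dual_elem_def by blast
  have pointwise: "\<exists>B. \<forall>k. \<bar>phi k x\<bar> \<le> B" if "x \<in> S" for x
    using convergent_imp_Bseq[OF convergentI[OF null[OF that]]] unfolding Bseq_def by auto
  obtain L where "\<And>k x. x \<in> S \<Longrightarrow> \<bar>phi k x\<bar> \<le> L * norm x"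
    using complete_linf \<open>closed S\<close> lin bounded pointwise that by (rule uniform_boundedness)
  then show thesis
    using lin \<open>c0 \<subseteq> S\<close>
    by (intro that[of L]) (simp add: bounded_functional_on_def bounded_functional_on_axioms_def)
qed

lemma linf_conv_iff_pairing:
  "linf_conv phi psi \<longleftrightarrow> (\<forall>z. (\<lambda>k. pairing (dual_coeff (phi k)) z) \<longlonglongrightarrow> pairing (dual_coeff psi) z)"
  unfolding linf_conv_def pairing_def dual_coeff_def ..

lemma linf_conv_if_l1_tendsto:
  assumes "\<And>k. summable (\<lambda>n. \<bar>dual_coeff (phi k) n\<bar>)" "summable (\<lambda>n. \<bar>dual_coeff psi n\<bar>)"
    and l1_null: "(\<lambda>k. l1_norm (\<lambda>n. dual_coeff (phi k) n - dual_coeff psi n)) \<longlonglongrightarrow> 0"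
  shows "linf_conv phi psi"
  unfolding linf_conv_iff_pairing
proof
  fix z
  define a where "a k n = dual_coeff (phi k) n - dual_coeff psi n" for k n
  have "summable (\<lambda>n. \<bar>a k n\<bar>)" for k
  proof (rule summable_comparison_test')
    show "summable (\<lambda>n. \<bar>dual_coeff (phi k) n\<bar> + \<bar>dual_coeff psi n\<bar>)"
      using assms(1,2) by (rule summable_add)
    show "norm \<bar>a k n\<bar> \<le> \<bar>dual_coeff (phi k) n\<bar> + \<bar>dual_coeff psi n\<bar>" for n
      unfolding a_def by (simp add: abs_triangle_ineq4)
  qed
  then have bound: "\<bar>pairing (a k) z\<bar> \<le> norm z * l1_norm (a k)" for k by (rule abs_pairing_le)
  have diff: "pairing (dual_coeff (phi k)) z - pairing (dual_coeff psi) z = pairing (a k) z" for k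
    unfolding pairing_def a_def using summable_pairing(2)[OF assms(1)] summable_pairing(2)[OF assms(2)]
    by (simp add: suminf_diff right_diff_distrib)
  have "(\<lambda>k. pairing (a k) z) \<longlonglongrightarrow> 0"
  proof (rule Lim_null_comparison)
    show "\<forall>\<^sub>F k in sequentially. norm (pairing (a k) z) \<le> norm z * l1_norm (a k)"
      using bound by simp
    show "(\<lambda>k. norm z * l1_norm (a k)) \<longlonglongrightarrow> 0"
      using tendsto_mult_right_zero[OF l1_null] unfolding a_def by simp
  qed
  then have "(\<lambda>k. pairing (dual_coeff (phi k)) z - pairing (dual_coeff psi) z) \<longlonglongrightarrow> 0"
    unfolding diff .
  then show "(\<lambda>k. pairing (dual_coeff (phi k)) z) \<longlonglongrightarrow> pairing (dual_coeff psi) z"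
    by (simp add: LIM_zero_iff)
qed

theorem corollary3p2:
  fixes S :: "linf set"
  assumes "subspace S" and "closed S" and "c0 \<subseteq> S"
    and "separable_quotient S"
  shows "linf_grothendieck S"
proof -
  have "linf_conv phi psi"
    if dual: "\<And>k. dual_elem S (phi k)" "dual_elem S psi" and "weak_star_conv S phi psi" for phi psi
  proof -
    define phi' where "phi' k x = phi k x - psi x" for k x
    have dual': "dual_elem S (phi' k)" for k unfolding phi'_def using dual by (rule dual_elem_diff)
    moreover have null: "(\<lambda>k. phi' k x) \<longlonglongrightarrow> 0" if "x \<in> S" for x
      using \<open>weak_star_conv S phi psi\<close> that unfolding weak_star_conv_def phi'_def
      by (simp add: LIM_zero)
    obtain L where "\<And>k. bounded_functional_on S (phi' k) L"
      using assms(1-3) dual' null that by (rule weak_star_null_imp_uniformly_bounded)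
    then have "(\<lambda>k. l1_norm (dual_coeff (phi' k))) \<longlonglongrightarrow> 0"
      by (rule l1_norm_dual_coeff_tendsto_zero[OF assms(4) _ null])
    moreover have "dual_coeff (phi' k) = (\<lambda>n. dual_coeff (phi k) n - dual_coeff psi n)" for k
      by (simp add: fun_eq_iff phi'_def dual_coeff_def)
    ultimately show ?thesis
      using dual by (intro linf_conv_if_l1_tendsto summable_dual_coeff_if_dual_elem[OF assms(1,3)]) auto
  qed
  then show ?thesis using assms(3) unfolding linf_grothendieck_def by blast
qed

end
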